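(* Let $D>0$, $n\ge1$, and let $V:S^1\to\mathbb R$ be continuous, odd and $\tfrac1n$-periodic. Then every nonnegative ($\mathcal C^2$) stationary solution $f$ of (TP) with $\int_{S^1}f=1$ is $\tfrac1n$-periodic.
   Context: $S^1=\mathbb R/\mathbb Z$; $(V*f)(\theta)=\int_{S^1}V(\theta-\psi)f(\psi)d\psi$. Equation (TP): $\partial_tf=D\partial_\theta^2f+\partial_\theta((V*f)f)$; a stationary solution is a time-independent solution. *)

theory Defs
  imports "HOL-Analysis.Analysis"
begin

text \<open>Functions on S^1 = R/Z are represented as 1-periodic functions on the reals.\<close>

definition periodic_with :: "real \<Rightarrow> (real \<Rightarrow> real) \<Rightarrow> bool" where
  "periodic_with p g \<longleftrightarrow> (\<forall>x. g (x + p) = g x)"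

definition circ_conv :: "(real \<Rightarrow> real) \<Rightarrow> (real \<Rightarrow> real) \<Rightarrow> real \<Rightarrow> real" where
  "circ_conv V f \<theta> = integral {0..1} (\<lambda>\<psi>. V (\<theta> - \<psi>) * f \<psi>)"

definition is_C2 :: "(real \<Rightarrow> real) \<Rightarrow> bool" where
  "is_C2 f \<longleftrightarrow> (\<forall>x. f differentiable (at x)) \<and> (\<forall>x. deriv f differentiable (at x))
      \<and> continuous_on UNIV (deriv (deriv f))"

definition stationary_TP :: "real \<Rightarrow> (real \<Rightarrow> real) \<Rightarrow> (real \<Rightarrow> real) \<Rightarrow> bool" where
  "stationary_TP D V f \<longleftrightarrow>
     (\<forall>\<theta>. (\<lambda>x. circ_conv V f x * f x) differentiable (at \<theta>) \<and>
          D * deriv (deriv f) \<theta> + deriv (\<lambda>x. circ_conv V f x * f x) \<theta> = 0)"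

end

theory Submission
  imports Defs
begin

(*
  Put h = 1/n and u(x) = f(x+h) - f(x).  A stationary solution has
  constant flux: integrating (TP) once gives  D f' + (V*f) f = const.  Since V is
  h-periodic, so is the convolution w = V*f; subtracting the flux identity at x and x+h
  shows that u solves the linear equation  D u' = - w u.  Because f >= 0 has mass 1 and V
  is continuous, w is bounded on bounded sets, so a Gronwall argument shows that u vanishes
  identically as soon as it vanishes at one point.  Finally u has a zero: the values
  u(0), u(h), ..., u((n-1)h) telescope to f(1) - f(0) = 0, so they cannot all have the
  same strict sign, and the intermediate value theorem gives a zero of u.
*)

text \<open>Gronwall, forward in time: if |u'| <= K|u| on [a,b] and u(a) = 0, then u(b) = 0.
  The weight exp(-2Kt) u(t)^2 is non-increasing and starts at 0.\<close>
lemma gronwall_zero_forward: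
  fixes u u' :: "real \<Rightarrow> real"
  assumes ab: "a \<le> b" and K: "K \<ge> 0"
    and deriv_u: "\<And>t. (u has_real_derivative u' t) (at t)"
    and bound: "\<And>t. t \<in> {a..b} \<Longrightarrow> \<bar>u' t\<bar> \<le> K * \<bar>u t\<bar>"
    and ua: "u a = 0"
  shows "u b = 0"
proof -
  define \<phi> where "\<phi> t = exp (-2*K*t) * (u t)^2" for t
  have deriv_\<phi>:
    "(\<phi> has_real_derivative exp (-2*K*t) * (2 * u t * u' t - 2*K*(u t)^2)) (at t)" for t
    unfolding \<phi>_def
    by (rule derivative_eq_intros deriv_u refl | simp)+ (simp add: algebra_simps)
  have cont: "continuous_on {a..b} \<phi>"
    using deriv_\<phi> by (meson DERIV_continuous continuous_at_imp_continuous_on)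
  have "\<phi> b \<le> \<phi> a"
  proof (rule DERIV_nonpos_imp_decreasing_open[OF ab _ cont])
    fix x assume x: "a < x" "x < b"
    have "u x * u' x \<le> \<bar>u x\<bar> * \<bar>u' x\<bar>" by (metis abs_ge_self abs_mult)
    also have "\<dots> \<le> \<bar>u x\<bar> * (K * \<bar>u x\<bar>)" using bound[of x] x by (intro mult_left_mono) auto
    also have "\<dots> = K * (u x)^2" by (simp add: power2_eq_square abs_mult_self_eq)
    finally have "exp (-2*K*x) * (2 * u x * u' x - 2*K*(u x)^2) \<le> 0"
      by (intro mult_nonneg_nonpos) auto
    then show "\<exists>y. (\<phi> has_real_derivative y) (at x) \<and> y \<le> 0" using deriv_\<phi> by blast
  qed
  then have "exp (-2*K*b) * (u b)^2 \<le> 0" using ua by (simp add: \<phi>_def)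
  then show ?thesis by (simp add: mult_le_0_iff)
qed

lemma linear_ode_unique_zero:
  fixes u u' w :: "real \<Rightarrow> real"
  assumes D: "D > 0"
    and deriv_u: "\<And>t. (u has_real_derivative u' t) (at t)"
    and ode: "\<And>t. D * u' t = - (w t * u t)"
    and w_bounded: "\<And>a b. \<exists>M. \<forall>t\<in>{a..b}. \<bar>w t\<bar> \<le> M"
    and u0: "u t0 = 0"
  shows "u x = 0"
proof -
  have lipschitz: "\<exists>K\<ge>0. \<forall>t\<in>{a..b}. \<bar>u' t\<bar> \<le> K * \<bar>u t\<bar>" for a b
  proof -
    obtain M where M: "\<forall>t\<in>{a..b}. \<bar>w t\<bar> \<le> M" using w_bounded by blast
    have "\<bar>u' t\<bar> \<le> (max M 0 / D) * \<bar>u t\<bar>" if t: "t \<in> {a..b}" for t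
    proof -
      have "u' t = - (w t * u t) / D" using ode[of t] D by (metis nonzero_mult_div_cancel_left less_irrefl)
      then have "\<bar>u' t\<bar> = \<bar>w t\<bar> * \<bar>u t\<bar> / D" using D by (simp add: abs_mult)
      also have "\<dots> \<le> max M 0 * \<bar>u t\<bar> / D"
        using M t D by (intro divide_right_mono mult_right_mono) (auto simp: le_max_iff_disj)
      finally show ?thesis by simp
    qed
    then show ?thesis using D by (intro exI[of _ "max M 0 / D"]) auto
  qed
  show ?thesis
  proof (cases "t0 \<le> x")
    case True
    obtain K where K: "K \<ge> 0" "\<forall>t\<in>{t0..x}. \<bar>u' t\<bar> \<le> K * \<bar>u t\<bar>" using lipschitz by blast
    show ?thesis by (rule gronwall_zero_forward[OF True K(1) deriv_u]) (use K u0 in auto)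
  next
    case False
    obtain K where K: "K \<ge> 0" "\<forall>t\<in>{x..t0}. \<bar>u' t\<bar> \<le> K * \<bar>u t\<bar>" using lipschitz by blast
    have deriv_reflected: "((\<lambda>t. u (-t)) has_real_derivative - u' (-t)) (at t)" for t
      using DERIV_chain2[OF deriv_u[of "-t"] DERIV_minus[OF DERIV_ident]] by simp
    have "(\<lambda>t. u (-t)) (-x) = 0"
    proof (rule gronwall_zero_forward[OF _ K(1) deriv_reflected])
      show "- t0 \<le> - x" using False by simp
      show "\<bar>- u' (- t)\<bar> \<le> K * \<bar>u (- t)\<bar>" if "t \<in> {-t0..-x}" for t
        using K that by auto
    qed (use u0 in auto)
    then show ?thesis by simp
  qed
qed

lemma circ_conv_periodic:
  assumes "periodic_with p V"
  shows "periodic_with p (circ_conv V f)"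
proof -
  have "(\<lambda>\<psi>. V (x + p - \<psi>) * f \<psi>) = (\<lambda>\<psi>. V (x - \<psi>) * f \<psi>)" for x
    using assms unfolding periodic_with_def by (metis diff_add_eq)
  then show ?thesis unfolding periodic_with_def circ_conv_def by simp
qed

text \<open>For a continuous kernel and a continuous probability density f on [0,1], the
  convolution is bounded on every bounded interval, by the bound of |V| on [a-1,b].\<close>
lemma circ_conv_locally_bounded:
  assumes V: "continuous_on UNIV V" and f: "continuous_on UNIV f"
    and f_nonneg: "\<forall>x. f x \<ge> 0" and mass: "integral {0..1} f = 1"
  shows "\<exists>M. \<forall>t\<in>{a..b}. \<bar>circ_conv V f t\<bar> \<le> M"
proof -
  have "compact (V ` {a-1..b})"
    by (rule compact_continuous_image) (use V continuous_on_subset in auto)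
  then obtain M where M: "\<forall>y\<in>V ` {a-1..b}. norm y \<le> M"
    using compact_imp_bounded bounded_iff by metis
  have "\<bar>circ_conv V f t\<bar> \<le> M" if t: "t \<in> {a..b}" for t
  proof -
    have "norm (integral {0..1} (\<lambda>\<psi>. V (t - \<psi>) * f \<psi>)) \<le> integral {0..1} (\<lambda>\<psi>. M * f \<psi>)"
    proof (rule integral_norm_bound_integral)
      show "(\<lambda>\<psi>. V (t - \<psi>) * f \<psi>) integrable_on {0..1}"
        by (intro integrable_continuous_interval continuous_intros
              continuous_on_compose2[OF V] continuous_on_subset[OF f]) auto
      show "(\<lambda>\<psi>. M * f \<psi>) integrable_on {0..1}"
        by (intro integrable_continuous_interval continuous_intros continuous_on_subset[OF f]) auto
      fix \<psi> :: real assume "\<psi> \<in> {0..1}"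
      then have "\<bar>V (t - \<psi>)\<bar> \<le> M" using M t by auto
      then show "norm (V (t - \<psi>) * f \<psi>) \<le> M * f \<psi>"
        using f_nonneg by (simp add: abs_mult mult_right_mono)
    qed
    also have "\<dots> = M" using mass by simp
    finally show ?thesis unfolding circ_conv_def by simp
  qed
  then show ?thesis by blast
qed

lemma stationary_flux_constant:
  assumes "is_C2 f" and "stationary_TP D V f"
  shows "D * deriv f x + circ_conv V f x * f x = D * deriv f y + circ_conv V f y * f y"
proof -
  define flux where "flux x = D * deriv f x + circ_conv V f x * f x" for x
  have "(flux has_real_derivative D * deriv (deriv f) x
          + deriv (\<lambda>x. circ_conv V f x * f x) x) (at x)" for x
    using assms unfolding flux_def[abs_def] is_C2_def stationary_TP_def
    by (intro DERIV_add DERIV_cmult) (simp_all add: DERIV_deriv_iff_real_differentiable)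
  then have "(flux has_real_derivative 0) (at x)" for x
    using assms(2) unfolding stationary_TP_def by simp
  then show ?thesis using DERIV_isconst_all unfolding flux_def by blast
qed

lemma shifted_difference_ode:
  assumes "is_C2 f" and "stationary_TP D V f" and "periodic_with h V"
  shows "D * (deriv f (x + h) - deriv f x) = - (circ_conv V f x * (f (x + h) - f x))"
proof -
  have per: "circ_conv V f (x + h) = circ_conv V f x"
    using circ_conv_periodic[OF assms(3)] unfolding periodic_with_def by blast
  show ?thesis
    using stationary_flux_constant[OF assms(1,2), of "x + h" x] unfolding per
    by (simp add: algebra_simps)
qed

text \<open>For a continuous 1-periodic g and n >= 1, the shift difference g(x + 1/n) - g(x)
  has a zero: its values at the points k/n telescope to g(1) - g(0) = 0.\<close>
lemma periodic_shift_difference_has_zero: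
  fixes g :: "real \<Rightarrow> real" and n :: nat
  assumes n: "n \<ge> 1" and g: "continuous_on UNIV g" and per: "periodic_with 1 g"
  obtains t where "g (t + 1 / real n) = g t"
proof -
  define h where "h = 1 / real n"
  define u where "u x = g (x + h) - g x" for x
  have "(\<Sum>k<n. u (real k * h)) = (\<Sum>k<n. g (real (Suc k) * h) - g (real k * h))"
    unfolding u_def by (simp add: algebra_simps)
  also have "\<dots> = g (real n * h) - g (real 0 * h)" by (rule sum_lessThan_telescope)
  also have "\<dots> = 0"
  proof -
    have "real n * h = 0 + 1" using n unfolding h_def by simp
    moreover have "g (0 + 1) = g 0" using per unfolding periodic_with_def by blast
    ultimately show ?thesis by simp
  qed
  finally have sum0: "(\<Sum>k<n. u (real k * h)) = 0" .
  have nonempty: "{..<n} \<noteq> {}" using n by (simp add: lessThan_empty_iff)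
  obtain k where k: "u (real k * h) \<ge> 0"
  proof (rule ccontr)
    assume "\<not> thesis"
    then have "u (real k * h) < 0" for k using that by (meson not_le)
    then have "(\<Sum>k<n. u (real k * h)) < (\<Sum>k<n. 0)"
      by (intro sum_strict_mono nonempty) auto
    then show False using sum0 by simp
  qed
  obtain j where j: "u (real j * h) \<le> 0"
  proof (rule ccontr)
    assume "\<not> thesis"
    then have "0 < u (real j * h)" for j using that by (meson not_le)
    then have "(\<Sum>k<n. 0) < (\<Sum>k<n. u (real k * h))"
      by (intro sum_strict_mono nonempty) auto
    then show False using sum0 by simp
  qed
  have u_cont: "continuous_on UNIV u"
    unfolding u_def by (intro continuous_intros continuous_on_compose2[OF g]) auto
  obtain t where "u t = 0"
  proof (cases "real j * h \<le> real k * h")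
    case True
    then show ?thesis
      using IVT'[OF j k True continuous_on_subset[OF u_cont]] that by blast
  next
    case False
    then show ?thesis
      using IVT2'[OF j k _ continuous_on_subset[OF u_cont]] that by fastforce
  qed
  then show ?thesis using that unfolding u_def h_def by simp
qed

theorem mainTheorem11:
  fixes D :: real and n :: nat and V f :: "real \<Rightarrow> real"
  assumes "D > 0" and "n \<ge> 1"
    and "continuous_on UNIV V"
    and "\<forall>x. V (- x) = - V x"
    and "periodic_with 1 V"
    and "periodic_with (1 / real n) V"
    and "periodic_with 1 f"
    and "is_C2 f"
    and "\<forall>x. f x \<ge> 0"
    and "integral {0..1} f = 1"
    and "stationary_TP D V f"
  shows "periodic_with (1 / real n) f"
proof -
  define h where "h = 1 / real n"
  have deriv_f: "(f has_real_derivative deriv f x) (at x)" for x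
    using assms(8) unfolding is_C2_def by (simp add: DERIV_deriv_iff_real_differentiable)
  have f_cont: "continuous_on UNIV f"
    using deriv_f by (meson DERIV_continuous continuous_at_imp_continuous_on)
  have deriv_u: "((\<lambda>x. f (x + h) - f x) has_real_derivative deriv f (x + h) - deriv f x) (at x)"
    for x by (intro DERIV_diff deriv_f DERIV_shift[THEN iffD1])
  obtain t0 where t0: "f (t0 + h) - f t0 = 0"
    using periodic_shift_difference_has_zero[OF assms(2) f_cont assms(7)] unfolding h_def by auto
  have "f (x + h) - f x = 0" for x
    by (rule linear_ode_unique_zero[OF assms(1) deriv_u
          shifted_difference_ode[OF assms(8,11) assms(6)[folded h_def]]
          circ_conv_locally_bounded[OF assms(3) f_cont assms(9,10)] t0])
  then show ?thesis unfolding periodic_with_def h_def by simp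
qed

end
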